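(* Let $X$ be a Banach space. Then the following are equivalent: (i) $X$ has weak normal structure; (ii) every orbitally Kannan mapping which diminishes the radius of orbits, defined on a weakly compact convex subset of $X$ into itself, has a (unique) fixed point.
   Context: For $x\in X$ and $A\subseteq X$, $r_x(A)=\sup\{\|x-y\|:y\in A\}$ and $\delta(A)$ is the diameter; $O_T(x)=\{x,Tx,T^2x,\dots\}$. A map $T:C\to C$ is orbitally Kannan if $\|Tx-Ty\|\le\frac12\big(r_x(O_T(x))+r_y(O_T(y))\big)$ for all $x,y\in C$, and diminishes the radius of orbits if $r_{Tx}(O_T(Tx))\le r_x(O_T(x))$ for all $x\in C$. $X$ has weak normal structure if every weakly compact convex subset $K$ of $X$ with more than one point has normal structure: for every closed convex $K_0\subseteq K$ with $\delta(K_0)>0$ there is $x_0\in K_0$ with $r_{x_0}(K_0)<\delta(K_0)$. *)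

theory Defs
  imports "HOL-Analysis.Analysis"
begin

definition weak_topology :: "'a::real_normed_vector topology" where
  "weak_topology = topology_generated_by
     {f -` U | (f :: 'a \<Rightarrow> real) U. bounded_linear f \<and> open U}"

definition weakly_compact :: "'a::real_normed_vector set \<Rightarrow> bool" where
  "weakly_compact K \<longleftrightarrow> compactin weak_topology K"

definition rad :: "'a::real_normed_vector \<Rightarrow> 'a set \<Rightarrow> real" where
  "rad x A = (SUP y\<in>A. norm (x - y))"

definition orbit :: "('a \<Rightarrow> 'a) \<Rightarrow> 'a \<Rightarrow> 'a set" where
  "orbit T x = range (\<lambda>n. (T ^^ n) x)"

definition orbitally_kannan :: "'a::real_normed_vector set \<Rightarrow> ('a \<Rightarrow> 'a) \<Rightarrow> bool" where
  "orbitally_kannan C T \<longleftrightarrow>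
     (\<forall>x\<in>C. \<forall>y\<in>C. norm (T x - T y) \<le> (rad x (orbit T x) + rad y (orbit T y)) / 2)"

definition diminishes_radius_of_orbits :: "'a::real_normed_vector set \<Rightarrow> ('a \<Rightarrow> 'a) \<Rightarrow> bool" where
  "diminishes_radius_of_orbits C T \<longleftrightarrow>
     (\<forall>x\<in>C. rad (T x) (orbit T (T x)) \<le> rad x (orbit T x))"

definition normal_structure :: "'a::real_normed_vector set \<Rightarrow> bool" where
  "normal_structure K \<longleftrightarrow>
     (\<forall>K0. K0 \<subseteq> K \<and> closed K0 \<and> convex K0 \<and> diameter K0 > 0 \<longrightarrow>
        (\<exists>x0\<in>K0. rad x0 K0 < diameter K0))"

definition weak_normal_structure :: "'a::real_normed_vector itself \<Rightarrow> bool" where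
  "weak_normal_structure _ \<longleftrightarrow>
     (\<forall>K :: 'a set. weakly_compact K \<and> convex K \<and> (\<exists>x\<in>K. \<exists>y\<in>K. x \<noteq> y) \<longrightarrow>
        normal_structure K)"

end

theory Submission
  imports Defs
begin

(*
  Both implications go through diametral sets.

  Let X have weak normal structure, and let T be an orbitally Kannan self-map of a weakly compact
  convex set C that diminishes the radius r(x) of orbits; let rho be the infimum of r over C. By
  the Kannan inequality, C intersected with the closed convex hull of T(A_e), where
  A_e = {x in C. r(x) <= rho + e}, is again contained in A_e, is T-invariant and has diameter at
  most rho + e. By weak compactness the intersection H of these sets over all e > 0 is nonempty;
  it is closed, convex and T-invariant, r = rho on H, and diam H <= rho. If T had no fixed point,
  H would have positive diameter, and normal structure would give a point x of H with
  rho = r(x) <= r_x(H) < diam H <= rho. Uniqueness is immediate from the Kannan inequality, since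
  the orbit of a fixed point is a singleton.

  Conversely, a closed convex set of diameter d > 0 in which every point is diametral contains a
  sequence each of whose terms is almost at distance d from the convex hull of its predecessors
  (Brodskii-Milman). On the closed convex hull of this sequence every orbit of the shift
  s_n -> s_(n+1) has radius at least d, so the shift is orbitally Kannan and diminishes the radius
  of orbits, but it has no fixed point.

  Weak compactness enters through the Hahn-Banach theorem: closed convex sets are weakly closed,
  and weakly compact sets are closed and, by the uniform boundedness principle, bounded.
*)

section \<open>Sublinear functionals and the Hahn--Banach theorem\<close>

definition sublinear :: "('a::real_vector \<Rightarrow> real) \<Rightarrow> bool" where
  "sublinear p \<longleftrightarrow> (\<forall>x y. p (x + y) \<le> p x + p y) \<and> (\<forall>c x. 0 < c \<longrightarrow> p (c *\<^sub>R x) = c * p x)"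

lemma sublinear_add: "sublinear p \<Longrightarrow> p (x + y) \<le> p x + p y"
  by (simp add: sublinear_def)

lemma sublinear_scale: "sublinear p \<Longrightarrow> 0 < c \<Longrightarrow> p (c *\<^sub>R x) = c * p x"
  by (simp add: sublinear_def)

lemma sublinear_norm: "sublinear norm"
  by (simp add: sublinear_def norm_triangle_ineq)

text \<open>Partial linear functionals are represented by their graphs, so that a chain of
  extensions is joined simply by taking the union.\<close>
definition dominated_linear_graph :: "('a::real_vector \<Rightarrow> real) \<Rightarrow> ('a \<times> real) set \<Rightarrow> bool" where
  "dominated_linear_graph p G \<longleftrightarrow> (0, 0) \<in> G \<and>
     (\<forall>x s y t. (x, s) \<in> G \<longrightarrow> (y, t) \<in> G \<longrightarrow> (x + y, s + t) \<in> G) \<and>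
     (\<forall>c x s. (x, s) \<in> G \<longrightarrow> (c *\<^sub>R x, c * s) \<in> G) \<and>
     (\<forall>x s t. (x, s) \<in> G \<longrightarrow> (x, t) \<in> G \<longrightarrow> s = t) \<and>
     (\<forall>x s. (x, s) \<in> G \<longrightarrow> s \<le> p x)"

lemma dominated_linear_graphD:
  assumes "dominated_linear_graph p G"
  shows dominated_linear_graph_zero: "(0, 0) \<in> G"
    and dominated_linear_graph_add: "(x, s) \<in> G \<Longrightarrow> (y, t) \<in> G \<Longrightarrow> (x + y, s + t) \<in> G"
    and dominated_linear_graph_scale: "(x, s) \<in> G \<Longrightarrow> (c *\<^sub>R x, c * s) \<in> G"
    and dominated_linear_graph_unique: "(x, s) \<in> G \<Longrightarrow> (x, t) \<in> G \<Longrightarrow> s = t"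
    and dominated_linear_graph_le: "(x, s) \<in> G \<Longrightarrow> s \<le> p x"
  using assms unfolding dominated_linear_graph_def by blast+

lemma dominated_linear_graph_extension_value:
  assumes p: "sublinear p" and M: "dominated_linear_graph p M"
  obtains c where "\<And>y s. (y, s) \<in> M \<Longrightarrow> s - p (y - w) \<le> c"
    and "\<And>x s. (x, s) \<in> M \<Longrightarrow> c \<le> p (x + w) - s"
proof -
  define L where "L = {s - p (y - w) | y s. (y, s) \<in> M}"
  have L_le: "l \<le> p (x + w) - s'" if "l \<in> L" "(x, s') \<in> M" for l x s'
  proof -
    obtain y s where ys: "(y, s) \<in> M" "l = s - p (y - w)" using \<open>l \<in> L\<close> unfolding L_def by blast
    have "s + s' \<le> p (y + x)"
      using dominated_linear_graph_le[OF M dominated_linear_graph_add[OF M ys(1) that(2)]] .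
    also have "p (y + x) = p ((y - w) + (x + w))" by simp
    also have "\<dots> \<le> p (y - w) + p (x + w)" using p by (rule sublinear_add)
    finally show ?thesis using ys by simp
  qed
  note M0 = dominated_linear_graph_zero[OF M]
  then have "0 - p (0 - w) \<in> L" unfolding L_def by blast
  then have "L \<noteq> {}" by blast
  have "bdd_above L" using L_le[OF _ M0] by (rule bdd_aboveI)
  show thesis
  proof
    show "s - p (y - w) \<le> Sup L" if "(y, s) \<in> M" for y s
      by (rule cSup_upper[OF _ \<open>bdd_above L\<close>]) (use that L_def in blast)
    show "Sup L \<le> p (x + w) - s" if "(x, s) \<in> M" for x s
      by (rule cSup_least[OF \<open>L \<noteq> {}\<close>]) (use L_le that in blast)
  qed
qed

lemma extension_value_dominated:
  assumes p: "sublinear p" and M: "dominated_linear_graph p M"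
    and c1: "\<And>y s. (y, s) \<in> M \<Longrightarrow> s - p (y - w) \<le> c"
    and c2: "\<And>x s. (x, s) \<in> M \<Longrightarrow> c \<le> p (x + w) - s"
    and xs: "(x, s) \<in> M"
  shows "s + t * c \<le> p (x + t *\<^sub>R w)"
proof (cases t "0 :: real" rule: linorder_cases)
  case less
  then have "- t > 0" by simp
  have "inverse (- t) * s - p (inverse (- t) *\<^sub>R x - w) \<le> c"
    using c1[OF dominated_linear_graph_scale[OF M xs]] .
  then have "s - (- t) * p (inverse (- t) *\<^sub>R x - w) \<le> (- t) * c"
    using \<open>- t > 0\<close> by (simp add: field_simps)
  also have "(- t) * p (inverse (- t) *\<^sub>R x - w) = p (x + t *\<^sub>R w)"
    using sublinear_scale[OF p \<open>- t > 0\<close>, of "inverse (- t) *\<^sub>R x - w"] less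
    by (simp add: scaleR_diff_right)
  finally show ?thesis by (simp add: algebra_simps)
next
  case equal
  then show ?thesis using dominated_linear_graph_le[OF M xs] by simp
next
  case greater
  have "c \<le> p (inverse t *\<^sub>R x + w) - inverse t * s"
    using c2[OF dominated_linear_graph_scale[OF M xs]] .
  then have "t * c \<le> t * p (inverse t *\<^sub>R x + w) - s"
    using greater by (simp add: field_simps)
  also have "t * p (inverse t *\<^sub>R x + w) = p (x + t *\<^sub>R w)"
    using sublinear_scale[OF p greater, of "inverse t *\<^sub>R x + w"] greater
    by (simp add: scaleR_add_right)
  finally show ?thesis by simp
qed

lemma dominated_linear_graph_extension:
  assumes p: "sublinear p" and M: "dominated_linear_graph p M" and w: "w \<notin> fst ` M"
    and c1: "\<And>y s. (y, s) \<in> M \<Longrightarrow> s - p (y - w) \<le> c"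
    and c2: "\<And>x s. (x, s) \<in> M \<Longrightarrow> c \<le> p (x + w) - s"
  shows "dominated_linear_graph p {(x + t *\<^sub>R w, s + t * c) | x s t. (x, s) \<in> M}"
    (is "dominated_linear_graph p ?M'")
  unfolding dominated_linear_graph_def
proof (intro conjI allI impI)
  show "(0, 0) \<in> ?M'" using dominated_linear_graph_zero[OF M] by force
next
  fix x s y t
  assume "(x, s) \<in> ?M'" "(y, t) \<in> ?M'"
  then obtain x1 s1 t1 x2 s2 t2 where h: "(x1, s1) \<in> M" "(x2, s2) \<in> M"
    "x = x1 + t1 *\<^sub>R w" "s = s1 + t1 * c" "y = x2 + t2 *\<^sub>R w" "t = s2 + t2 * c"
    by blast
  show "(x + y, s + t) \<in> ?M'"
    using dominated_linear_graph_add[OF M h(1,2)] h(3-6)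
    by (intro CollectI exI[of _ "x1 + x2"] exI[of _ "s1 + s2"] exI[of _ "t1 + t2"])
       (simp add: algebra_simps scaleR_add_left)
next
  fix a x s
  assume "(x, s) \<in> ?M'"
  then obtain x1 s1 t1 where h: "(x1, s1) \<in> M" "x = x1 + t1 *\<^sub>R w" "s = s1 + t1 * c"
    by blast
  have "(a *\<^sub>R x, a * s) = (a *\<^sub>R x1 + (a * t1) *\<^sub>R w, a * s1 + (a * t1) * c)"
    using h(2,3) by (simp add: algebra_simps scaleR_add_right)
  then show "(a *\<^sub>R x, a * s) \<in> ?M'" using dominated_linear_graph_scale[OF M h(1)] by blast
next
  fix x s t
  assume "(x, s) \<in> ?M'" "(x, t) \<in> ?M'"
  then obtain x1 s1 t1 x2 s2 t2 where h: "(x1, s1) \<in> M" "(x2, s2) \<in> M"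
    "x = x1 + t1 *\<^sub>R w" "s = s1 + t1 * c" "x = x2 + t2 *\<^sub>R w" "t = s2 + t2 * c"
    by blast
  have "t1 = t2"
  proof (rule ccontr)
    assume "t1 \<noteq> t2"
    have "(inverse (t1 - t2) *\<^sub>R (x2 + (-1) *\<^sub>R x1), inverse (t1 - t2) * (s2 + (-1) * s1)) \<in> M"
      using M h(1,2) by (intro dominated_linear_graph_scale dominated_linear_graph_add)
    moreover have "x2 - x1 = (t1 - t2) *\<^sub>R w" using h(3,5) by (simp add: algebra_simps)
    then have "inverse (t1 - t2) *\<^sub>R (x2 + (-1) *\<^sub>R x1) = w" using \<open>t1 \<noteq> t2\<close> by simp
    ultimately have "w \<in> fst ` M" by (metis fst_conv image_eqI)
    then show False using w by simp
  qed
  with h dominated_linear_graph_unique[OF M] show "s = t" by auto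
next
  fix x s
  assume "(x, s) \<in> ?M'"
  then show "s \<le> p x" using extension_value_dominated[OF p M c1 c2] by blast
qed

lemma dominated_linear_graph_extend:
  assumes p: "sublinear p" and M: "dominated_linear_graph p M" and w: "w \<notin> fst ` M"
  obtains M' where "dominated_linear_graph p M'" "M \<subset> M'"
proof -
  obtain c where c1: "\<And>y s. (y, s) \<in> M \<Longrightarrow> s - p (y - w) \<le> c"
    and c2: "\<And>x s. (x, s) \<in> M \<Longrightarrow> c \<le> p (x + w) - s"
    using dominated_linear_graph_extension_value[OF p M] by blast
  define M' where "M' = {(x + t *\<^sub>R w, s + t * c) | x s t. (x, s) \<in> M}"
  have "(x, s) \<in> M'" if "(x, s) \<in> M" for x s
    unfolding M'_def using that by (intro CollectI exI[of _ x] exI[of _ s] exI[of _ 0]) simp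
  then have "M \<subseteq> M'" by auto
  moreover have "(0 + 1 *\<^sub>R w, 0 + 1 * c) \<in> M'"
    unfolding M'_def using dominated_linear_graph_zero[OF M] by blast
  then have "(w, c) \<in> M' - M" using w by (auto simp: image_iff)
  ultimately show thesis
    using that dominated_linear_graph_extension[OF p M w c1 c2] unfolding M'_def by blast
qed

lemma dominated_linear_graph_Union:
  assumes chain: "subset.chain {G. dominated_linear_graph p G} \<C>" and "\<C> \<noteq> {}"
  shows "dominated_linear_graph p (\<Union>\<C>)"
proof -
  have graph: "\<And>G. G \<in> \<C> \<Longrightarrow> dominated_linear_graph p G"
    and total: "\<And>G H. G \<in> \<C> \<Longrightarrow> H \<in> \<C> \<Longrightarrow> G \<subseteq> H \<or> H \<subseteq> G"
    using chain unfolding subset_chain_def by blast+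
  have common: "\<exists>G\<in>\<C>. u \<in> G \<and> v \<in> G" if uv: "u \<in> \<Union>\<C>" "v \<in> \<Union>\<C>" for u v
  proof -
    obtain G H where "G \<in> \<C>" "H \<in> \<C>" "u \<in> G" "v \<in> H" using uv by blast
    then show ?thesis using total[of G H] by blast
  qed
  obtain G0 where "G0 \<in> \<C>" using \<open>\<C> \<noteq> {}\<close> by blast
  show ?thesis
    unfolding dominated_linear_graph_def
  proof (intro conjI allI impI)
    show "(0, 0) \<in> \<Union>\<C>"
      using dominated_linear_graph_zero[OF graph[OF \<open>G0 \<in> \<C>\<close>]] \<open>G0 \<in> \<C>\<close> by blast
    show "(x + y, s + t) \<in> \<Union>\<C>" if xy: "(x, s) \<in> \<Union>\<C>" "(y, t) \<in> \<Union>\<C>" for x s y t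
    proof -
      obtain G where "G \<in> \<C>" "(x, s) \<in> G" "(y, t) \<in> G" using common[OF xy] by blast
      then show ?thesis using dominated_linear_graph_add[OF graph] by blast
    qed
    show "(c *\<^sub>R x, c * s) \<in> \<Union>\<C>" if xs: "(x, s) \<in> \<Union>\<C>" for c x s
    proof -
      obtain G where "G \<in> \<C>" "(x, s) \<in> G" using xs by blast
      then show ?thesis using dominated_linear_graph_scale[OF graph] by blast
    qed
    show "s = t" if xx: "(x, s) \<in> \<Union>\<C>" "(x, t) \<in> \<Union>\<C>" for x s t
    proof -
      obtain G where "G \<in> \<C>" "(x, s) \<in> G" "(x, t) \<in> G" using common[OF xx] by blast
      then show ?thesis using dominated_linear_graph_unique[OF graph] by blast
    qed
    show "s \<le> p x" if xs: "(x, s) \<in> \<Union>\<C>" for x s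
    proof -
      obtain G where "G \<in> \<C>" "(x, s) \<in> G" using xs by blast
      then show ?thesis using dominated_linear_graph_le[OF graph] by blast
    qed
  qed
qed

lemma dominated_linear_graph_maximal:
  assumes p: "sublinear p" and G: "dominated_linear_graph p G"
  obtains M where "dominated_linear_graph p M" "G \<subseteq> M" "\<And>x. \<exists>s. (x, s) \<in> M"
proof -
  let ?A = "{M. dominated_linear_graph p M \<and> G \<subseteq> M}"
  have "\<exists>M\<in>?A. \<forall>X\<in>?A. M \<subseteq> X \<longrightarrow> X = M"
  proof (rule subset_Zorn_nonempty)
    show "?A \<noteq> {}" using G by blast
    fix \<C> assume "\<C> \<noteq> {}" "subset.chain ?A \<C>"
    then have "subset.chain {G. dominated_linear_graph p G} \<C>" and "G \<subseteq> \<Union>\<C>"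
      unfolding subset_chain_def by blast+
    with \<open>\<C> \<noteq> {}\<close> show "\<Union>\<C> \<in> ?A" using dominated_linear_graph_Union by blast
  qed
  then obtain M where M: "dominated_linear_graph p M" "G \<subseteq> M"
    and max: "\<forall>X\<in>?A. M \<subseteq> X \<longrightarrow> X = M"
    by blast
  have "\<exists>s. (x, s) \<in> M" for x
  proof (rule ccontr)
    assume "\<nexists>s. (x, s) \<in> M"
    then have "x \<notin> fst ` M" by force
    then obtain M' where M': "dominated_linear_graph p M'" "M \<subset> M'"
      by (rule dominated_linear_graph_extend[OF p M(1)])
    then have "M' \<in> ?A" using M(2) by blast
    then show False using max M'(2) by blast
  qed
  with M show thesis using that by blast
qed

theorem hahn_banach_graph:
  assumes p: "sublinear p" and G: "dominated_linear_graph p G"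
  obtains f where "linear f" "\<And>x. f x \<le> p x" "\<And>x s. (x, s) \<in> G \<Longrightarrow> f x = s"
proof -
  obtain M where M: "dominated_linear_graph p M" "G \<subseteq> M" and total: "\<And>x. \<exists>s. (x, s) \<in> M"
    using dominated_linear_graph_maximal[OF p G] by blast
  obtain f where f: "\<And>x. (x, f x) \<in> M" using total by metis
  have f_eq: "f x = s" if "(x, s) \<in> M" for x s
    using dominated_linear_graph_unique[OF M(1) f that] .
  have "linear f"
  proof (rule linearI)
    show "f (x + y) = f x + f y" for x y
      using f_eq[OF dominated_linear_graph_add[OF M(1) f f]] .
    show "f (c *\<^sub>R x) = c *\<^sub>R f x" for c x
      using f_eq[OF dominated_linear_graph_scale[OF M(1) f]] by simp
  qed
  moreover have "f x \<le> p x" for x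
    using dominated_linear_graph_le[OF M(1) f] .
  moreover have "f x = s" if "(x, s) \<in> G" for x s
    using f_eq M(2) that by blast
  ultimately show thesis using that by blast
qed

lemma line_functional_dominated:
  assumes p: "sublinear p" and a: "a \<le> p z" "- a \<le> p (- z)"
  shows "t * a \<le> p (t *\<^sub>R z)"
proof (cases t "0 :: real" rule: linorder_cases)
  case less
  then have "t * a \<le> (- t) * p (- z)" using mult_left_mono[OF a(2), of "- t"] by simp
  also have "\<dots> = p (t *\<^sub>R z)" using sublinear_scale[OF p, of "- t" "- z"] less by simp
  finally show ?thesis .
next
  case equal
  then show ?thesis using sublinear_scale[OF p, of 2 0] by simp
next
  case greater
  then show ?thesis using a(1) sublinear_scale[OF p greater, of z] by (simp add: mult_left_mono)
qed

lemma dominated_linear_graph_line: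
  assumes p: "sublinear p" and z: "z \<noteq> 0" and a: "a \<le> p z" "- a \<le> p (- z)"
  shows "dominated_linear_graph p {(t *\<^sub>R z, t * a) | t. True}" (is "dominated_linear_graph p ?G")
  unfolding dominated_linear_graph_def
proof (intro conjI allI impI)
  show "(0, 0) \<in> ?G" by (intro CollectI exI[of _ 0]) simp
  show "(x + y, s + t) \<in> ?G" if "(x, s) \<in> ?G" "(y, t) \<in> ?G" for x s y t
  proof -
    obtain t1 t2 where "x = t1 *\<^sub>R z" "s = t1 * a" "y = t2 *\<^sub>R z" "t = t2 * a"
      using \<open>(x, s) \<in> ?G\<close> \<open>(y, t) \<in> ?G\<close> by blast
    then show ?thesis by (intro CollectI exI[of _ "t1 + t2"]) (simp add: scaleR_add_left distrib_right)
  qed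
  show "(c *\<^sub>R x, c * s) \<in> ?G" if "(x, s) \<in> ?G" for c x s
  proof -
    obtain t where "x = t *\<^sub>R z" "s = t * a" using \<open>(x, s) \<in> ?G\<close> by blast
    then show ?thesis by (intro CollectI exI[of _ "c * t"]) simp
  qed
  show "s = t" if "(x, s) \<in> ?G" "(x, t) \<in> ?G" for x s t
  proof -
    obtain t1 t2 where "x = t1 *\<^sub>R z" "s = t1 * a" "x = t2 *\<^sub>R z" "t = t2 * a"
      using \<open>(x, s) \<in> ?G\<close> \<open>(x, t) \<in> ?G\<close> by blast
    then show ?thesis using z by simp
  qed
  show "s \<le> p x" if "(x, s) \<in> ?G" for x s
    using that line_functional_dominated[OF p a] by blast
qed

corollary hahn_banach_point:
  assumes p: "sublinear p" and z: "z \<noteq> 0" and a: "a \<le> p z" "- a \<le> p (- z)"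
  obtains f where "linear f" "\<And>x. f x \<le> p x" "f z = a"
proof -
  obtain f where "linear f" "\<And>x. f x \<le> p x"
    and "\<And>x s. (x, s) \<in> {(t *\<^sub>R z, t * a) | t. True} \<Longrightarrow> f x = s"
    using hahn_banach_graph[OF p dominated_linear_graph_line[OF p z a]] by blast
  moreover have "(z, a) \<in> {(t *\<^sub>R z, t * a) | t. True}" by (intro CollectI exI[of _ 1]) simp
  ultimately show thesis using that by blast
qed

lemma bounded_linear_if_dominated:
  fixes f :: "'a::real_normed_vector \<Rightarrow> real"
  assumes f: "linear f" and K: "\<And>x. f x \<le> K * norm x"
  shows "bounded_linear f"
proof (rule bounded_linear_intro[where K = K])
  show "f (x + y) = f x + f y" "f (r *\<^sub>R x) = r *\<^sub>R f x" for x y r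
    using f by (simp_all add: linear_add linear_scale)
  show "norm (f x) \<le> norm x * K" for x
    using K[of x] K[of "- x"] f by (simp add: linear_neg abs_le_iff mult.commute)
qed

lemma norming_functional:
  fixes x :: "'a::real_normed_vector"
  assumes "x \<noteq> 0"
  obtains f where "bounded_linear f" "f x = norm x" "\<And>y. \<bar>f y\<bar> \<le> norm y"
proof -
  obtain f where f: "linear f" "\<And>y. f y \<le> norm y" "f x = norm x"
    using hahn_banach_point[OF sublinear_norm assms, of "norm x"] by auto
  have "\<bar>f y\<bar> \<le> norm y" for y
    using f(2)[of y] f(2)[of "- y"] f(1) by (simp add: linear_neg abs_le_iff)
  moreover have "bounded_linear f"
    using bounded_linear_if_dominated[OF f(1), of 1] f(2) by simp
  ultimately show thesis using that f(3) by blast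
qed

section \<open>Separation of closed convex sets\<close>

definition minkowski_functional :: "'a::real_normed_vector set \<Rightarrow> 'a \<Rightarrow> real" where
  "minkowski_functional W x = Inf {t. 0 < t \<and> x /\<^sub>R t \<in> W}"

lemma minkowski_functional_le: "0 < t \<Longrightarrow> x /\<^sub>R t \<in> W \<Longrightarrow> minkowski_functional W x \<le> t"
  unfolding minkowski_functional_def by (rule cInf_lower) (auto intro: bdd_belowI[of _ 0])

lemma minkowski_functional_le_1: "w \<in> W \<Longrightarrow> minkowski_functional W w \<le> 1"
  using minkowski_functional_le[of 1 w] by simp

context
  fixes W :: "'a::real_normed_vector set" and r :: real
  assumes W: "convex W" and r: "0 < r" and ball: "ball 0 r \<subseteq> W"
begin

lemma minkowski_functional_admissible: "0 < e \<Longrightarrow> x /\<^sub>R (norm x / r + e) \<in> W"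
proof -
  assume e: "0 < e"
  define t where "t = norm x / r + e"
  have t: "0 < t" unfolding t_def using r e by (simp add: add_nonneg_pos)
  have "norm x < r * t" unfolding t_def using r e by (simp add: distrib_left)
  then have "norm x / t < r" using t by (simp add: divide_less_eq mult.commute)
  moreover have "norm (x /\<^sub>R t) = norm x / t" using t by (simp add: divide_inverse_commute)
  ultimately show ?thesis using ball unfolding t_def by auto
qed

lemma minkowski_functional_greatest:
  assumes "\<And>t. 0 < t \<Longrightarrow> x /\<^sub>R t \<in> W \<Longrightarrow> c \<le> t"
  shows "c \<le> minkowski_functional W x"
proof -
  have "norm x / r + 1 \<in> {t. 0 < t \<and> x /\<^sub>R t \<in> W}"
    using minkowski_functional_admissible[of 1] r by (simp add: add_nonneg_pos)
  then show ?thesis unfolding minkowski_functional_def using assms by (intro cInf_greatest) auto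
qed

lemma minkowski_functional_nonneg: "0 \<le> minkowski_functional W x"
  by (rule minkowski_functional_greatest) simp

lemma minkowski_functional_le_norm: "minkowski_functional W x \<le> norm x / r"
proof (rule field_le_epsilon)
  fix e :: real assume "0 < e"
  then show "minkowski_functional W x \<le> norm x / r + e"
    using minkowski_functional_admissible r
    by (intro minkowski_functional_le) (auto simp: add_nonneg_pos)
qed

lemma minkowski_functional_ge_1:
  assumes "z \<notin> W"
  shows "1 \<le> minkowski_functional W z"
proof (rule minkowski_functional_greatest, rule ccontr)
  fix t assume t: "0 < t" "z /\<^sub>R t \<in> W" and "\<not> 1 \<le> t"
  have "0 \<in> W" using ball r by auto
  then have "t *\<^sub>R (z /\<^sub>R t) + (1 - t) *\<^sub>R 0 \<in> W"
    using t \<open>\<not> 1 \<le> t\<close> by (intro convexD[OF W t(2)]) simp_all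
  then show False using assms t by simp
qed

lemma minkowski_functional_add:
  "minkowski_functional W (x + y) \<le> minkowski_functional W x + minkowski_functional W y"
proof -
  have "minkowski_functional W (x + y) \<le> s + t"
    if "0 < s" "x /\<^sub>R s \<in> W" "0 < t" "y /\<^sub>R t \<in> W" for s t
  proof (rule minkowski_functional_le)
    have "(s / (s + t)) *\<^sub>R (x /\<^sub>R s) + (t / (s + t)) *\<^sub>R (y /\<^sub>R t) \<in> W"
      using that by (intro convexD[OF W]) (simp_all add: add_divide_distrib[symmetric])
    moreover have "(s / (s + t)) *\<^sub>R (x /\<^sub>R s) + (t / (s + t)) *\<^sub>R (y /\<^sub>R t) = (x + y) /\<^sub>R (s + t)"
      using that by (simp add: scaleR_add_right inverse_eq_divide)
    ultimately show "(x + y) /\<^sub>R (s + t) \<in> W" by simp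
    show "0 < s + t" using that by simp
  qed
  then have "minkowski_functional W (x + y) - t \<le> minkowski_functional W x"
    if "0 < t" "y /\<^sub>R t \<in> W" for t
    using that by (intro minkowski_functional_greatest) (simp add: algebra_simps)
  then have "minkowski_functional W (x + y) - minkowski_functional W x \<le> minkowski_functional W y"
    by (intro minkowski_functional_greatest) (simp add: algebra_simps)
  then show ?thesis by simp
qed

lemma minkowski_functional_scale_le:
  assumes "0 < c"
  shows "minkowski_functional W (c *\<^sub>R x) \<le> c * minkowski_functional W x"
proof -
  have "minkowski_functional W (c *\<^sub>R x) / c \<le> minkowski_functional W x"
  proof (rule minkowski_functional_greatest)
    fix t assume "0 < t" "x /\<^sub>R t \<in> W"
    moreover have "(c *\<^sub>R x) /\<^sub>R (c * t) = x /\<^sub>R t" using assms by simp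
    ultimately have "(c *\<^sub>R x) /\<^sub>R (c * t) \<in> W" by (simp only:)
    with assms \<open>0 < t\<close> have "minkowski_functional W (c *\<^sub>R x) \<le> c * t"
      by (intro minkowski_functional_le) simp_all
    then show "minkowski_functional W (c *\<^sub>R x) / c \<le> t"
      using assms by (simp add: divide_le_eq mult.commute)
  qed
  then show ?thesis using assms by (simp add: divide_le_eq mult.commute)
qed

lemma sublinear_minkowski_functional: "sublinear (minkowski_functional W)"
  unfolding sublinear_def
proof (intro conjI allI impI minkowski_functional_add)
  fix c :: real and x assume "0 < c"
  have "minkowski_functional W x = minkowski_functional W (inverse c *\<^sub>R (c *\<^sub>R x))"
    using \<open>0 < c\<close> by simp
  also have "\<dots> \<le> inverse c * minkowski_functional W (c *\<^sub>R x)"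
    using \<open>0 < c\<close> by (intro minkowski_functional_scale_le) simp
  finally have "c * minkowski_functional W x \<le> minkowski_functional W (c *\<^sub>R x)"
    using \<open>0 < c\<close> by (simp add: field_simps)
  then show "minkowski_functional W (c *\<^sub>R x) = c * minkowski_functional W x"
    using minkowski_functional_scale_le[OF \<open>0 < c\<close>, of x] by linarith
qed

lemma separating_functional_convex_nhd:
  assumes "z \<notin> W"
  obtains f :: "'a \<Rightarrow> real" where "bounded_linear f" "f z = 1" "\<And>w. w \<in> W \<Longrightarrow> f w \<le> 1"
proof -
  have "z \<noteq> 0" using assms ball r by (metis centre_in_ball subsetD)
  have "1 \<le> minkowski_functional W z" "- 1 \<le> minkowski_functional W (- z)"
    using minkowski_functional_ge_1[OF assms] minkowski_functional_nonneg[of "- z"] by simp_all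
  then obtain f where f: "linear f" "\<And>x. f x \<le> minkowski_functional W x" "f z = 1"
    using hahn_banach_point[OF sublinear_minkowski_functional \<open>z \<noteq> 0\<close>] by blast
  have "f x \<le> 1 / r * norm x" for x
    using f(2)[of x] minkowski_functional_le_norm[of x] by simp
  then have "bounded_linear f" by (rule bounded_linear_if_dominated[OF f(1)])
  moreover have "f w \<le> 1" if "w \<in> W" for w
    using f(2)[of w] minkowski_functional_le_1[OF that] by linarith
  ultimately show thesis using f(3) by (intro that)
qed

end

lemma separating_functional_closed_convex:
  fixes K :: "'a::real_normed_vector set"
  assumes "closed K" "convex K" "q \<notin> K"
  obtains f :: "'a \<Rightarrow> real" and c where "bounded_linear f" "\<And>k. k \<in> K \<Longrightarrow> f k \<le> c" "c < f q"
proof (cases "K = {}")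
  case True
  then show thesis by (intro that[OF bounded_linear_zero, of "-1"]) auto
next
  case False
  then obtain k0 where "k0 \<in> K" by blast
  have "open (- K)" using assms(1) by (simp add: closed_def)
  then obtain r where r: "0 < r" "ball q r \<subseteq> - K"
    using assms(3) open_contains_ball by blast
  \<comment> \<open>K - k0 thickened by radius r: a convex neighbourhood of 0 that misses q - k0\<close>
  define W where "W = (\<Union>x\<in>(\<lambda>k. k - k0) ` K. \<Union>b\<in>ball 0 r. {x + b})"
  have "convex W" unfolding W_def using assms(2) by (intro convex_sums) auto
  have k_in_W: "k - k0 + b \<in> W" if "k \<in> K" "norm b < r" for k b
    unfolding W_def using that by (intro UN_I[of "k - k0"] UN_I[of b]) auto
  have "ball 0 r \<subseteq> W" using k_in_W[OF \<open>k0 \<in> K\<close>] by auto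
  have "q - k0 \<notin> W"
  proof
    assume "q - k0 \<in> W"
    then obtain k b where "k \<in> K" "norm b < r" "q - k0 = k - k0 + b" unfolding W_def by auto
    then have "k \<in> ball q r" by (simp add: dist_norm algebra_simps)
    then show False using r \<open>k \<in> K\<close> by blast
  qed
  then obtain f :: "'a \<Rightarrow> real" where f: "bounded_linear f" "f (q - k0) = 1" "\<And>w. w \<in> W \<Longrightarrow> f w \<le> 1"
    using separating_functional_convex_nhd[OF \<open>convex W\<close> r(1) \<open>ball 0 r \<subseteq> W\<close>] by blast
  interpret f: bounded_linear f by (fact f(1))
  have "q \<noteq> k0"
    using \<open>q - k0 \<notin> W\<close> \<open>ball 0 r \<subseteq> W\<close> r(1) by (metis centre_in_ball diff_self subsetD)
  \<comment> \<open>translating K - k0 by b keeps it inside W, which makes the separation strict\<close>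
  define b where "b = (r / (2 * norm (q - k0))) *\<^sub>R (q - k0)"
  have "norm b < r" "0 < f b"
    using r(1) \<open>q \<noteq> k0\<close> f(2) by (simp_all add: b_def f.scale real_scaleR_def)
  have "f k \<le> f k0 + 1 - f b" if "k \<in> K" for k
    using f(3)[OF k_in_W[OF that \<open>norm b < r\<close>]] by (simp add: f.add f.diff)
  moreover have "f k0 + 1 - f b < f q" using f(2) \<open>0 < f b\<close> by (simp add: f.diff)
  ultimately show thesis by (rule that[OF f(1)])
qed

section \<open>The weak topology\<close>

lemma topspace_weak_topology [simp]: "topspace (weak_topology :: 'a::real_normed_vector topology) = UNIV"
proof -
  have "(UNIV :: 'a set) \<in> {f -` U | (f :: 'a \<Rightarrow> real) U. bounded_linear f \<and> open U}"
    by (intro CollectI exI[of _ "\<lambda>_. 0"] exI[of _ UNIV]) (simp add: bounded_linear_zero)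
  then show ?thesis unfolding weak_topology_def topology_generated_by_topspace by blast
qed

lemma openin_weak_vimage:
  fixes f :: "'a::real_normed_vector \<Rightarrow> real"
  assumes "bounded_linear f" "open U"
  shows "openin weak_topology (f -` U)"
  unfolding weak_topology_def by (rule topology_generated_by_Basis) (use assms in blast)

lemma continuous_map_weak_topology:
  fixes f :: "'a::real_normed_vector \<Rightarrow> real"
  assumes "bounded_linear f"
  shows "continuous_map weak_topology euclideanreal f"
  unfolding continuous_map_def using openin_weak_vimage[OF assms] by (simp add: vimage_def)

lemma open_if_openin_weak:
  assumes "openin (weak_topology :: 'a::real_normed_vector topology) S"
  shows "open S"
proof -
  have "generate_topology_on {f -` U | (f :: 'a \<Rightarrow> real) U. bounded_linear f \<and> open U} S"
    using assms unfolding weak_topology_def by (rule openin_topology_generated_by)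
  then show ?thesis
  proof (induction rule: generate_topology_on.induct)
    case (Basis s)
    then obtain f :: "'a \<Rightarrow> real" and U where "s = f -` U" "bounded_linear f" "open U" by blast
    then show ?case using open_vimage linear_continuous_on by blast
  qed auto
qed

lemma closedin_weak_closed_convex:
  fixes K :: "'a::real_normed_vector set"
  assumes "closed K" "convex K"
  shows "closedin weak_topology K"
proof -
  have "openin weak_topology (- K)"
  proof (subst openin_subopen, intro ballI)
    fix q assume "q \<in> - K"
    then obtain f :: "'a \<Rightarrow> real" and c where f: "bounded_linear f" "\<And>k. k \<in> K \<Longrightarrow> f k \<le> c" "c < f q"
      using separating_functional_closed_convex[OF assms] by blast
    have "openin weak_topology (f -` {c<..})" by (rule openin_weak_vimage[OF f(1) open_greaterThan])
    moreover have "q \<in> f -` {c<..}" "f -` {c<..} \<subseteq> - K" using f(2,3) by force+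
    ultimately show "\<exists>T. openin weak_topology T \<and> q \<in> T \<and> T \<subseteq> - K" by blast
  qed
  then show ?thesis by (simp add: closedin_def Compl_eq_Diff_UNIV)
qed

lemma Hausdorff_space_weak_topology: "Hausdorff_space (weak_topology :: 'a::real_normed_vector topology)"
  unfolding Hausdorff_space_def
proof (intro allI impI)
  fix x y :: 'a assume "x \<in> topspace weak_topology \<and> y \<in> topspace weak_topology \<and> x \<noteq> y"
  then have "x \<notin> {y}" by simp
  then obtain f :: "'a \<Rightarrow> real" and c
    where f: "bounded_linear f" "\<And>k. k \<in> {y} \<Longrightarrow> f k \<le> c" "c < f x"
    using separating_functional_closed_convex[OF closed_singleton convex_singleton \<open>x \<notin> {y}\<close>] by blast
  define m where "m = (c + f x) / 2"
  have "openin weak_topology (f -` {m<..})" "openin weak_topology (f -` {..<m})"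
    by (simp_all add: openin_weak_vimage[OF f(1)])
  moreover have "x \<in> f -` {m<..}" "y \<in> f -` {..<m}" "disjnt (f -` {m<..}) (f -` {..<m})"
    using f unfolding m_def disjnt_def by auto
  ultimately show "\<exists>U V. openin weak_topology U \<and> openin weak_topology V \<and> x \<in> U \<and> y \<in> V \<and> disjnt U V"
    by blast
qed

lemma weakly_compact_imp_closed:
  fixes K :: "'a::real_normed_vector set"
  assumes "weakly_compact K"
  shows "closed K"
proof -
  have "closedin weak_topology K"
    using Hausdorff_space_weak_topology assms unfolding weakly_compact_def by (rule compactin_imp_closedin)
  then have "open (- K)" by (simp add: closedin_def Compl_eq_Diff_UNIV open_if_openin_weak)
  then show ?thesis by (simp add: closed_def)
qed

lemma weakly_compact_Int_closed_convex:
  fixes K :: "'a::real_normed_vector set"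
  assumes "weakly_compact K" "closed C" "convex C"
  shows "weakly_compact (C \<inter> K)"
  using assms unfolding weakly_compact_def by (intro closed_Int_compactin closedin_weak_closed_convex)

lemma closed_cover_interior_nonempty:
  fixes E :: "nat \<Rightarrow> 'a::complete_space set"
  assumes "\<And>n. closed (E n)" "(\<Union>n. E n) = UNIV"
  obtains n where "interior (E n) \<noteq> {}"
proof -
  have "\<not> (\<forall>n. interior (E n) = {})"
  proof
    assume empty: "\<forall>n. interior (E n) = {}"
    have "euclidean interior_of (\<Union>(range E)) = {}"
    proof (rule Baire_category_alt)
      show "completely_metrizable_space (euclidean :: 'a topology) \<or>
          locally_compact_space euclidean \<and> regular_space euclidean"
        using completely_metrizable_space_euclidean by blast
      show "countable (range E)" by simp
      fix T assume "T \<in> range E"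
      then obtain n where "T = E n" by blast
      then show "closedin euclidean T \<and> euclidean interior_of T = {}"
        using closed_closedin[THEN iffD1, OF assms(1)[of n]] empty by simp
    qed
    then show False using assms(2) by simp
  qed
  then show thesis using that by blast
qed

lemma norm_le_if_functionals_bounded_on_ball:
  fixes x :: "'a::real_normed_vector"
  assumes e: "0 < e" and bound: "\<And>g. g \<in> ball g0 e \<Longrightarrow> \<bar>blinfun_apply g x\<bar> \<le> c"
  shows "norm x \<le> 4 * c / e"
proof (cases "x = 0")
  case True
  then show ?thesis using bound[of g0] e by simp
next
  case False
  then obtain f :: "'a \<Rightarrow> real" where f: "bounded_linear f" "f x = norm x" "\<And>y. \<bar>f y\<bar> \<le> norm y"
    using norming_functional by blast
  define g where "g = g0 + (e / 2) *\<^sub>R Blinfun f"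
  have "norm (Blinfun f) \<le> 1"
    by (rule norm_blinfun_bound) (use f in \<open>simp_all add: bounded_linear_Blinfun_apply\<close>)
  then have "dist g g0 < e" unfolding g_def dist_norm using e by (simp add: mult_left_le)
  then have "\<bar>blinfun_apply g x\<bar> \<le> c" "\<bar>blinfun_apply g0 x\<bar> \<le> c"
    using bound e by (auto simp: dist_commute)
  moreover have "blinfun_apply g x = blinfun_apply g0 x + (e / 2) * norm x"
    unfolding g_def using f by (simp add: blinfun.bilinear_simps bounded_linear_Blinfun_apply)
  ultimately have "(e / 2) * norm x \<le> 2 * c" by linarith
  then show ?thesis using e by (simp add: field_simps)
qed

lemma bounded_if_functionals_bounded:
  fixes K :: "'a::real_normed_vector set"
  assumes bounded_image: "\<And>f :: 'a \<Rightarrow> real. bounded_linear f \<Longrightarrow> bounded (f ` K)"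
  shows "bounded K"
proof -
  define E where "E n = {g :: 'a \<Rightarrow>\<^sub>L real. \<forall>x\<in>K. \<bar>blinfun_apply g x\<bar> \<le> real n}" for n
  have "closed (E n)" for n
  proof -
    have "E n = (\<Inter>x\<in>K. {g. \<bar>blinfun_apply g x\<bar> \<le> real n})" unfolding E_def by auto
    moreover have "closed {g :: 'a \<Rightarrow>\<^sub>L real. \<bar>blinfun_apply g x\<bar> \<le> real n}" for x
      by (intro closed_Collect_le continuous_on_rabs linear_continuous_on
          blinfun.bounded_linear_left continuous_on_const)
    ultimately show ?thesis by auto
  qed
  moreover have "(\<Union>n. E n) = UNIV"
  proof -
    have "\<exists>n. g \<in> E n" for g
    proof -
      obtain B where B: "\<forall>x\<in>K. norm (blinfun_apply g x) \<le> B"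
        using bounded_image[OF blinfun.bounded_linear_right] unfolding bounded_iff by blast
      have "\<bar>blinfun_apply g x\<bar> \<le> real (nat \<lceil>B\<rceil>)" if "x \<in> K" for x
      proof -
        have "norm (blinfun_apply g x) \<le> B" using B that by blast
        then show ?thesis using real_nat_ceiling_ge[of B] unfolding real_norm_def by linarith
      qed
      then have "g \<in> E (nat \<lceil>B\<rceil>)" unfolding E_def by blast
      then show ?thesis by blast
    qed
    then show ?thesis by blast
  qed
  ultimately obtain n where "interior (E n) \<noteq> {}" using closed_cover_interior_nonempty by blast
  then obtain g0 e where e: "0 < e" "ball g0 e \<subseteq> E n" by (meson all_not_in_conv mem_interior)
  have "norm x \<le> 4 * real n / e" if "x \<in> K" for x
    using e(1) by (rule norm_le_if_functionals_bounded_on_ball) (use e(2) that in \<open>auto simp: E_def\<close>)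
  then show ?thesis unfolding bounded_iff by blast
qed

lemma weakly_compact_imp_bounded:
  fixes K :: "'a::real_normed_vector set"
  assumes "weakly_compact K"
  shows "bounded K"
proof (rule bounded_if_functionals_bounded)
  fix f :: "'a \<Rightarrow> real" assume "bounded_linear f"
  have "compactin euclideanreal (f ` K)"
    using assms continuous_map_weak_topology[OF \<open>bounded_linear f\<close>]
    unfolding weakly_compact_def by (rule image_compactin)
  then show "bounded (f ` K)" by (simp add: compact_imp_bounded)
qed

section \<open>Radii and orbits\<close>

lemma rad_upper:
  fixes A :: "'a::real_normed_vector set"
  assumes "bounded A" "y \<in> A"
  shows "norm (x - y) \<le> rad x A"
proof -
  obtain M where "\<And>y. y \<in> A \<Longrightarrow> norm y \<le> M" using assms(1) unfolding bounded_iff by blast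
  then have "norm (x - y) \<le> norm x + M" if "y \<in> A" for y
    using norm_triangle_ineq4[of x y] that by fastforce
  then have "bdd_above ((\<lambda>y. norm (x - y)) ` A)" by (intro bdd_aboveI2)
  then show ?thesis unfolding rad_def by (rule cSUP_upper[OF assms(2)])
qed

lemma rad_least:
  fixes A :: "'a::real_normed_vector set"
  assumes "A \<noteq> {}" "\<And>y. y \<in> A \<Longrightarrow> norm (x - y) \<le> c"
  shows "rad x A \<le> c"
  unfolding rad_def using assms by (rule cSUP_least)

lemma rad_mono:
  fixes A :: "'a::real_normed_vector set"
  assumes "bounded B" "A \<noteq> {}" "A \<subseteq> B"
  shows "rad x A \<le> rad x B"
  using assms by (intro rad_least rad_upper) auto

lemma rad_singleton [simp]: "rad x {x} = 0"
  unfolding rad_def by simp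

lemma funpow_in_orbit: "(T ^^ n) x \<in> orbit T x"
  unfolding orbit_def by simp

lemma orbit_nonempty: "orbit T x \<noteq> {}"
  unfolding orbit_def by simp

lemma funpow_in_invariant: "T ` C \<subseteq> C \<Longrightarrow> x \<in> C \<Longrightarrow> (T ^^ n) x \<in> C"
  by (induction n) auto

lemma orbit_subset_invariant:
  assumes "T ` C \<subseteq> C" "x \<in> C"
  shows "orbit T x \<subseteq> C"
  unfolding orbit_def using funpow_in_invariant[OF assms] by auto

lemma orbit_fixed_point: "T x = x \<Longrightarrow> orbit T x = {x}"
proof -
  assume "T x = x"
  then have "(T ^^ n) x = x" for n by (induction n) simp_all
  then show ?thesis unfolding orbit_def by auto
qed

lemma orbitally_kannan_fixed_point_unique:
  assumes "orbitally_kannan C T" "x \<in> C" "y \<in> C" "T x = x" "T y = y"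
  shows "x = y"
proof -
  have "norm (T x - T y) \<le> (rad x (orbit T x) + rad y (orbit T y)) / 2"
    using assms(1-3) unfolding orbitally_kannan_def by blast
  then show ?thesis using assms(4,5) by (simp add: orbit_fixed_point)
qed

lemma closure_convex_hull_subset_cball:
  fixes S :: "'a::real_normed_vector set"
  assumes "S \<subseteq> cball x r"
  shows "closure (convex hull S) \<subseteq> cball x r"
  using assms by (intro closure_minimal hull_minimal) auto

lemma compactin_INT_nonempty:
  assumes S: "compactin X S" and "I \<noteq> {}"
    and closed: "\<And>i. i \<in> I \<Longrightarrow> closedin X (D i)"
    and sub: "\<And>i. i \<in> I \<Longrightarrow> D i \<subseteq> S" and ne: "\<And>i. i \<in> I \<Longrightarrow> D i \<noteq> {}"
    and directed: "\<And>i j. i \<in> I \<Longrightarrow> j \<in> I \<Longrightarrow> \<exists>k\<in>I. D k \<subseteq> D i \<inter> D j"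
  shows "(\<Inter>i\<in>I. D i) \<noteq> {}"
proof -
  have lower: "\<exists>k\<in>I. D k \<subseteq> (\<Inter>j\<in>J. D j)" if "finite J" "J \<noteq> {}" "J \<subseteq> I" for J
    using that
  proof (induction J rule: finite_ne_induct)
    case (singleton j)
    then show ?case by blast
  next
    case (insert j J)
    then obtain k where "k \<in> I" "D k \<subseteq> (\<Inter>j\<in>J. D j)" by blast
    moreover obtain k' where "k' \<in> I" "D k' \<subseteq> D j \<inter> D k" using directed insert.prems \<open>k \<in> I\<close> by blast
    ultimately show ?case by blast
  qed
  have fip: "S \<inter> \<Inter>\<F> \<noteq> {}" if F: "finite \<F>" "\<F> \<subseteq> D ` I" for \<F>
  proof -
    obtain J where J: "J \<subseteq> I" "finite J" "\<F> = D ` J" using finite_subset_image[OF F] by blast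
    obtain i where "i \<in> I" using \<open>I \<noteq> {}\<close> by blast
    show ?thesis
    proof (cases "J = {}")
      case True
      then show ?thesis using J sub[OF \<open>i \<in> I\<close>] ne[OF \<open>i \<in> I\<close>] by auto
    next
      case False
      then obtain k where "k \<in> I" "D k \<subseteq> \<Inter>\<F>" using lower[OF J(2) _ J(1)] J(3) by auto
      then show ?thesis using sub ne by blast
    qed
  qed
  have "S \<inter> \<Inter>(D ` I) \<noteq> {}"
    using closed fip by (intro compactin_fip[THEN iffD1, OF S, THEN conjunct2, rule_format]) auto
  then show ?thesis by blast
qed

section \<open>Fixed points of orbitally Kannan maps\<close>

locale orbitally_kannan_self_map =
  fixes C :: "'a::real_normed_vector set" and T :: "'a \<Rightarrow> 'a"
  assumes weakly_compact: "weakly_compact C" and convex: "convex C" and nonempty: "C \<noteq> {}"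
    and maps_into: "T ` C \<subseteq> C" and kannan: "orbitally_kannan C T"
    and diminishes: "diminishes_radius_of_orbits C T"
begin

definition orbit_radius :: "'a \<Rightarrow> real" where
  "orbit_radius x = rad x (orbit T x)"

lemma bounded: "bounded C"
  using weakly_compact by (rule weakly_compact_imp_bounded)

lemma closed: "closed C"
  using weakly_compact by (rule weakly_compact_imp_closed)

lemma funpow_in: "x \<in> C \<Longrightarrow> (T ^^ n) x \<in> C"
  using maps_into by (rule funpow_in_invariant)

lemma norm_diff_funpow_le_orbit_radius: "x \<in> C \<Longrightarrow> norm (x - (T ^^ n) x) \<le> orbit_radius x"
  unfolding orbit_radius_def
  by (intro rad_upper funpow_in_orbit bounded_subset[OF bounded orbit_subset_invariant[OF maps_into]])

lemma orbit_radius_le: "(\<And>n. norm (x - (T ^^ n) x) \<le> c) \<Longrightarrow> orbit_radius x \<le> c"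
  unfolding orbit_radius_def by (rule rad_least[OF orbit_nonempty]) (auto simp: orbit_def)

lemma orbit_radius_nonneg: "x \<in> C \<Longrightarrow> 0 \<le> orbit_radius x"
  using norm_diff_funpow_le_orbit_radius[of x 0] by simp

lemma orbit_radius_funpow_le: "x \<in> C \<Longrightarrow> orbit_radius ((T ^^ n) x) \<le> orbit_radius x"
proof (induction n)
  case (Suc n)
  have "orbit_radius (T ((T ^^ n) x)) \<le> orbit_radius ((T ^^ n) x)"
    using diminishes funpow_in[OF Suc.prems]
    unfolding diminishes_radius_of_orbits_def orbit_radius_def by blast
  then show ?case using Suc by simp
qed simp

lemma norm_diff_le_orbit_radius:
  "x \<in> C \<Longrightarrow> y \<in> C \<Longrightarrow> norm (T x - T y) \<le> (orbit_radius x + orbit_radius y) / 2"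
  using kannan unfolding orbitally_kannan_def orbit_radius_def by blast

text \<open>By the Kannan condition each iterate T (T^m z) lies within (orbit_radius z + c) / 2 of
  every point of T ` S, hence also of z, which is in the closed convex hull of T ` S; thus
  orbit_radius z is at most (orbit_radius z + c) / 2.\<close>
lemma orbit_radius_le_on_closed_hull:
  assumes S: "S \<subseteq> C" "S \<noteq> {}" "\<And>y. y \<in> S \<Longrightarrow> orbit_radius y \<le> c"
    and z: "z \<in> C" "z \<in> closure (convex hull (T ` S))"
  shows "orbit_radius z \<le> c"
proof -
  define R where "R = (orbit_radius z + c) / 2"
  have "0 \<le> c" using S orbit_radius_nonneg order_trans by blast
  have "norm (z - (T ^^ n) z) \<le> R" for n
  proof (cases n)
    case 0
    then show ?thesis using orbit_radius_nonneg[OF z(1)] \<open>0 \<le> c\<close> unfolding R_def by simp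
  next
    case (Suc m)
    have "T ` S \<subseteq> cball (T ((T ^^ m) z)) R"
    proof
      fix u assume "u \<in> T ` S"
      then obtain y where y: "y \<in> S" "u = T y" by blast
      have "norm (T ((T ^^ m) z) - T y) \<le> (orbit_radius ((T ^^ m) z) + orbit_radius y) / 2"
        using norm_diff_le_orbit_radius funpow_in[OF z(1)] S(1) y(1) by blast
      also have "\<dots> \<le> R"
        unfolding R_def using orbit_radius_funpow_le[OF z(1), of m] S(3)[OF y(1)] by simp
      finally show "u \<in> cball (T ((T ^^ m) z)) R" using y by (simp add: dist_norm)
    qed
    then have "z \<in> cball (T ((T ^^ m) z)) R"
      using closure_convex_hull_subset_cball z(2) by blast
    then show ?thesis using Suc by (simp add: dist_norm norm_minus_commute)
  qed
  then have "orbit_radius z \<le> R" by (rule orbit_radius_le)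
  then show ?thesis unfolding R_def by simp
qed

definition min_radius :: real where
  "min_radius = Inf (orbit_radius ` C)"

definition sublevel :: "real \<Rightarrow> 'a set" where
  "sublevel e = {y \<in> C. orbit_radius y \<le> min_radius + e}"

definition hull_sublevel :: "real \<Rightarrow> 'a set" where
  "hull_sublevel e = C \<inter> closure (convex hull (T ` sublevel e))"

lemma min_radius_le: "x \<in> C \<Longrightarrow> min_radius \<le> orbit_radius x"
  unfolding min_radius_def by (rule cInf_lower) (auto intro: bdd_belowI2 orbit_radius_nonneg)

lemma min_radius_nonneg: "0 \<le> min_radius"
  unfolding min_radius_def using nonempty orbit_radius_nonneg by (intro cInf_greatest) auto

lemma sublevel_nonempty: "0 < e \<Longrightarrow> sublevel e \<noteq> {}"
proof -
  assume "0 < e"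
  then have "Inf (orbit_radius ` C) < min_radius + e" unfolding min_radius_def by simp
  then obtain y where "y \<in> C" "orbit_radius y < min_radius + e"
    using cInf_lessD[of "orbit_radius ` C"] nonempty by blast
  then show ?thesis unfolding sublevel_def by force
qed

lemma hull_sublevel_subset_sublevel: "0 < e \<Longrightarrow> hull_sublevel e \<subseteq> sublevel e"
  using orbit_radius_le_on_closed_hull[of "sublevel e" "min_radius + e"] sublevel_nonempty[of e]
  unfolding hull_sublevel_def sublevel_def by blast

lemma image_sublevel_subset: "T ` sublevel e \<subseteq> hull_sublevel e"
  unfolding hull_sublevel_def sublevel_def using maps_into hull_subset closure_subset by fast

lemma hull_sublevel_invariant: "0 < e \<Longrightarrow> T ` hull_sublevel e \<subseteq> hull_sublevel e"
  using hull_sublevel_subset_sublevel image_sublevel_subset by blast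

lemma hull_sublevel_nonempty: "0 < e \<Longrightarrow> hull_sublevel e \<noteq> {}"
  using image_sublevel_subset sublevel_nonempty by blast

lemma hull_sublevel_mono: "e \<le> e' \<Longrightarrow> hull_sublevel e \<subseteq> hull_sublevel e'"
  unfolding hull_sublevel_def sublevel_def by (intro Int_mono closure_mono hull_mono image_mono) auto

lemma closed_hull_sublevel: "closed (hull_sublevel e)"
  unfolding hull_sublevel_def using closed by blast

lemma convex_hull_sublevel: "convex (hull_sublevel e)"
  unfolding hull_sublevel_def using convex by (simp add: convex_Int convex_closure)

lemma norm_diff_hull_sublevel:
  assumes "x \<in> hull_sublevel e" "y \<in> hull_sublevel e"
  shows "norm (x - y) \<le> min_radius + e"
proof -
  let ?H = "closure (convex hull (T ` sublevel e))"
  have "T ` sublevel e \<subseteq> cball u (min_radius + e)" if u: "u \<in> T ` sublevel e" for u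
  proof
    fix v assume "v \<in> T ` sublevel e"
    then obtain a b where ab: "a \<in> sublevel e" "b \<in> sublevel e" "u = T a" "v = T b"
      using u by blast
    have "norm (T a - T b) \<le> (orbit_radius a + orbit_radius b) / 2"
      using norm_diff_le_orbit_radius ab(1,2) unfolding sublevel_def by blast
    also have "\<dots> \<le> min_radius + e" using ab unfolding sublevel_def by simp
    finally show "v \<in> cball u (min_radius + e)" using ab by (simp add: dist_norm)
  qed
  then have H: "?H \<subseteq> cball u (min_radius + e)" if "u \<in> T ` sublevel e" for u
    using closure_convex_hull_subset_cball that by blast
  have "T ` sublevel e \<subseteq> cball x (min_radius + e)"
  proof
    fix u assume "u \<in> T ` sublevel e"
    then have "x \<in> cball u (min_radius + e)" using H assms(1) unfolding hull_sublevel_def by blast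
    then show "u \<in> cball x (min_radius + e)" by (simp add: dist_commute)
  qed
  then have "?H \<subseteq> cball x (min_radius + e)" by (rule closure_convex_hull_subset_cball)
  then show ?thesis using assms(2) unfolding hull_sublevel_def by (auto simp: dist_norm)
qed

definition core :: "'a set" where
  "core = (\<Inter>e\<in>{0<..}. hull_sublevel e)"

lemma core_subset: "core \<subseteq> C"
  unfolding core_def hull_sublevel_def by auto

lemma core_nonempty: "core \<noteq> {}"
  unfolding core_def
proof (rule compactin_INT_nonempty)
  show "compactin weak_topology C" using weakly_compact unfolding weakly_compact_def .
  show "closedin weak_topology (hull_sublevel e)" for e
    by (intro closedin_weak_closed_convex closed_hull_sublevel convex_hull_sublevel)
  show "hull_sublevel e \<subseteq> C" for e unfolding hull_sublevel_def by blast
  show "\<exists>k\<in>{0<..}. hull_sublevel k \<subseteq> hull_sublevel i \<inter> hull_sublevel j"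
    if "i \<in> {0<..}" "j \<in> {0<..}" for i j
    using that hull_sublevel_mono[of "min i j"] by (intro bexI[of _ "min i j"]) auto
qed (use hull_sublevel_nonempty in auto)

lemma orbit_radius_core: "x \<in> core \<Longrightarrow> orbit_radius x = min_radius"
proof -
  assume x: "x \<in> core"
  have "orbit_radius x \<le> min_radius"
  proof (rule field_le_epsilon)
    fix e :: real assume "0 < e"
    then show "orbit_radius x \<le> min_radius + e"
      using x hull_sublevel_subset_sublevel unfolding core_def sublevel_def by blast
  qed
  moreover have "min_radius \<le> orbit_radius x" using x core_subset min_radius_le by blast
  ultimately show ?thesis by linarith
qed

lemma core_invariant: "T ` core \<subseteq> core"
  unfolding core_def using hull_sublevel_invariant by blast

lemma closed_core: "closed core"
  unfolding core_def by (simp add: closed_INT closed_hull_sublevel)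

lemma convex_core: "convex core"
  unfolding core_def by (intro convex_INT convex_hull_sublevel)

lemma diameter_core_le: "diameter core \<le> min_radius"
proof (rule diameter_le)
  show "core \<noteq> {} \<or> 0 \<le> min_radius" using min_radius_nonneg by simp
  fix x y assume "x \<in> core" "y \<in> core"
  show "norm (x - y) \<le> min_radius"
  proof (rule field_le_epsilon)
    fix e :: real assume "0 < e"
    then show "norm (x - y) \<le> min_radius + e"
      using \<open>x \<in> core\<close> \<open>y \<in> core\<close> norm_diff_hull_sublevel unfolding core_def by blast
  qed
qed

text \<open>If T moved every point, the core would be a closed convex set of positive diameter all
  of whose points are diametral: the orbit of any of its points stays in the core and already
  has radius min_radius, which bounds the diameter of the core.\<close>
theorem fixed_point_exists:
  assumes "weak_normal_structure TYPE('a)"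
  shows "\<exists>x\<in>C. T x = x"
proof (rule ccontr)
  assume no_fixed_point: "\<not> (\<exists>x\<in>C. T x = x)"
  obtain x0 where x0: "x0 \<in> core" using core_nonempty by blast
  then have "T x0 \<in> core" "T x0 \<noteq> x0" using core_invariant core_subset no_fixed_point by blast+
  then have "normal_structure C"
    using assms x0 core_subset weakly_compact convex unfolding weak_normal_structure_def by blast
  moreover have "0 < dist x0 (T x0)" using \<open>T x0 \<noteq> x0\<close> by simp
  then have "0 < diameter core"
    using diameter_bounded_bound[OF bounded_subset[OF bounded core_subset] x0 \<open>T x0 \<in> core\<close>]
    by linarith
  ultimately obtain x where x: "x \<in> core" "rad x core < diameter core"
    using core_subset closed_core convex_core unfolding normal_structure_def by blast
  have "orbit T x \<subseteq> core" using orbit_subset_invariant[OF core_invariant x(1)] .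
  then have "orbit_radius x \<le> rad x core"
    unfolding orbit_radius_def by (intro rad_mono bounded_subset[OF bounded core_subset] orbit_nonempty)
  then show False using x diameter_core_le orbit_radius_core by fastforce
qed

end

section \<open>Fixed-point-free maps on diametral sets\<close>

definition barycenter :: "'a::real_vector set \<Rightarrow> 'a" where
  "barycenter S = (\<Sum>v\<in>S. v) /\<^sub>R real (card S)"

lemma barycenter_in_convex_hull:
  fixes S :: "'a::real_vector set"
  assumes "finite S" "S \<noteq> {}"
  shows "barycenter S \<in> convex hull S"
proof -
  let ?u = "\<lambda>_. inverse (real (card S))"
  have "real (card S) > 0" using assms by (simp add: card_gt_0_iff)
  then have "(\<forall>v\<in>S. 0 \<le> ?u v) \<and> sum ?u S = 1 \<and> (\<Sum>v\<in>S. ?u v *\<^sub>R v) = barycenter S"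
    unfolding barycenter_def by (simp add: scaleR_sum_right)
  then show ?thesis unfolding convex_hull_finite[OF assms(1)] by (intro CollectI exI[of _ ?u])
qed

lemma barycenter_decomposition:
  fixes S :: "'a::real_vector set"
  assumes fin: "finite S" and ne: "S \<noteq> {}" and u: "sum u S = 1" "(\<Sum>v\<in>S. u v *\<^sub>R v) = y"
  shows "s - barycenter S =
    (1 / real (card S)) *\<^sub>R (s - y) + (\<Sum>v\<in>S. ((1 - u v) / real (card S)) *\<^sub>R (s - v))"
proof -
  define k where "k = real (card S)"
  have k: "k > 0" using fin ne unfolding k_def by (simp add: card_gt_0_iff)
  have "(\<Sum>v\<in>S. ((1 - u v) / k) *\<^sub>R v) = (1 / k) *\<^sub>R (\<Sum>v\<in>S. v) - (1 / k) *\<^sub>R y"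
    unfolding u(2)[symmetric]
    by (simp add: scaleR_sum_right sum_subtractf[symmetric] diff_divide_distrib scaleR_diff_left)
  moreover have "(\<Sum>v\<in>S. ((1 - u v) / k) *\<^sub>R s) = ((k - 1) / k) *\<^sub>R s"
    using u(1) by (simp add: scaleR_sum_left[symmetric] sum_divide_distrib[symmetric] sum_subtractf k_def)
  moreover have "(1 / k) *\<^sub>R s + ((k - 1) / k) *\<^sub>R s = s"
    using k by (simp add: scaleR_add_left[symmetric] add_divide_distrib[symmetric])
  moreover have "barycenter S = (1 / k) *\<^sub>R (\<Sum>v\<in>S. v)"
    unfolding barycenter_def k_def by (simp add: divide_inverse)
  ultimately show ?thesis
    unfolding k_def[symmetric] by (simp add: scaleR_diff_right sum_subtractf algebra_simps)
qed

text \<open>Writing y as a convex combination of S with weights u, the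
  barycenter is the convex combination of y (weight 1/k) and the points v of S
  (weights (1 - u v)/k), where k is the number of points.\<close>
lemma norm_diff_convex_hull_ge:
  fixes S :: "'a::real_normed_vector set"
  assumes fin: "finite S" and ne: "S \<noteq> {}" and bd: "\<And>v. v \<in> S \<Longrightarrow> norm (s - v) \<le> d"
    and far: "d - \<eta> \<le> norm (s - barycenter S)" and y: "y \<in> convex hull S"
  shows "d - real (card S) * \<eta> \<le> norm (s - y)"
proof -
  obtain u where u: "\<forall>x\<in>S. 0 \<le> u x" "sum u S = 1" "(\<Sum>v\<in>S. u v *\<^sub>R v) = y"
    using y unfolding convex_hull_finite[OF fin] by blast
  define k where "k = real (card S)"
  have k: "k > 0" using fin ne unfolding k_def by (simp add: card_gt_0_iff)
  define \<beta> where "\<beta> v = (1 - u v) / k" for v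
  have "0 \<le> \<beta> v" if "v \<in> S" for v
    using member_le_sum[OF that] u(1,2) fin k unfolding \<beta>_def by fastforce
  then have "norm (\<Sum>v\<in>S. \<beta> v *\<^sub>R (s - v)) \<le> (\<Sum>v\<in>S. \<beta> v * d)"
    using bd by (intro order_trans[OF norm_sum] sum_mono) (simp add: mult_left_mono)
  also have "(\<Sum>v\<in>S. \<beta> v * d) = (k - 1) / k * d"
    unfolding \<beta>_def using u(2)
    by (simp add: sum_distrib_right[symmetric] sum_divide_distrib[symmetric] sum_subtractf k_def)
  finally have "norm (s - barycenter S) \<le> norm (s - y) / k + (k - 1) / k * d"
    using norm_triangle_ineq[of "(1 / k) *\<^sub>R (s - y)" "\<Sum>v\<in>S. \<beta> v *\<^sub>R (s - v)"] k
    unfolding barycenter_decomposition[OF fin ne u(2,3)] \<beta>_def k_def by simp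
  then have "k * (d - \<eta>) \<le> k * (norm (s - y) / k + (k - 1) / k * d)"
    using far k by (intro mult_left_mono) simp_all
  also have "\<dots> = norm (s - y) + (k - 1) * d" using k by (simp add: field_simps)
  finally show ?thesis unfolding k_def by (simp add: algebra_simps)
qed

primrec greedy_prefix :: "('a set \<Rightarrow> nat \<Rightarrow> 'a) \<Rightarrow> 'a \<Rightarrow> nat \<Rightarrow> 'a set" where
  "greedy_prefix pick a 0 = {a}"
| "greedy_prefix pick a (Suc n) =
     insert (pick (greedy_prefix pick a n) (Suc n)) (greedy_prefix pick a n)"

text \<open>Recursion on all earlier terms, realised through the finite set of earlier terms.\<close>
definition greedy_seq :: "('a set \<Rightarrow> nat \<Rightarrow> 'a) \<Rightarrow> 'a \<Rightarrow> nat \<Rightarrow> 'a" where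
  "greedy_seq pick a m = (case m of 0 \<Rightarrow> a | Suc n \<Rightarrow> pick (greedy_prefix pick a n) m)"

lemma greedy_prefix_eq: "greedy_prefix pick a n = greedy_seq pick a ` {..n}"
  by (induction n) (simp_all add: greedy_seq_def atMost_Suc)

lemma greedy_seq_0 [simp]: "greedy_seq pick a 0 = a"
  by (simp add: greedy_seq_def)

lemma greedy_seq_Suc: "greedy_seq pick a (Suc n) = pick (greedy_seq pick a ` {..n}) (Suc n)"
  by (simp add: greedy_seq_def greedy_prefix_eq)

definition shift :: "(nat \<Rightarrow> 'a) \<Rightarrow> 'a \<Rightarrow> 'a" where
  "shift s x = (if x \<in> range s then s (Suc (inv s x)) else s 0)"

lemma shift_apply: "inj s \<Longrightarrow> shift s (s n) = s (Suc n)"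
  by (simp add: shift_def)

lemma shift_in_range: "shift s x \<in> range s"
  by (simp add: shift_def)

lemma shift_no_fixed_point:
  assumes "inj s"
  shows "shift s x \<noteq> x"
proof
  assume fixed: "shift s x = x"
  obtain n where "x = s n" using shift_in_range[of s x] fixed by auto
  then have "s (Suc n) = s n" using fixed shift_apply[OF assms] by simp
  then show False using assms by (simp add: inj_eq)
qed

lemma orbit_shift_contains_tail:
  assumes "inj s"
  obtains N where "\<And>m. N \<le> m \<Longrightarrow> s m \<in> orbit (shift s) x"
proof -
  obtain n where "shift s x = s n" using shift_in_range[of s x] by blast
  then have "(shift s ^^ Suc k) x = s (n + k)" for k
    by (induction k) (simp_all add: shift_apply[OF assms])
  then have "s m \<in> orbit (shift s) x" if "n \<le> m" for m
    using funpow_in_orbit[of "Suc (m - n)" "shift s" x] that by simp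
  then show thesis by (rule that)
qed

lemma orbitally_kannan_if_orbits_diametral:
  assumes "\<And>x y. x \<in> C \<Longrightarrow> y \<in> C \<Longrightarrow> norm (x - y) \<le> d"
    and "\<And>x. x \<in> C \<Longrightarrow> d \<le> rad x (orbit T x)" and "T ` C \<subseteq> C"
  shows "orbitally_kannan C T"
  unfolding orbitally_kannan_def
proof (intro ballI)
  fix x y assume "x \<in> C" "y \<in> C"
  then have "norm (T x - T y) \<le> d" using assms(1,3) by blast
  also have "d \<le> (rad x (orbit T x) + rad y (orbit T y)) / 2"
    using assms(2)[OF \<open>x \<in> C\<close>] assms(2)[OF \<open>y \<in> C\<close>] by (simp add: field_simps)
  finally show "norm (T x - T y) \<le> (rad x (orbit T x) + rad y (orbit T y)) / 2" .
qed

lemma diminishes_radius_if_orbits_diametral: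
  assumes "\<And>x y. x \<in> C \<Longrightarrow> y \<in> C \<Longrightarrow> norm (x - y) \<le> d"
    and "\<And>x. x \<in> C \<Longrightarrow> d \<le> rad x (orbit T x)" and "T ` C \<subseteq> C"
  shows "diminishes_radius_of_orbits C T"
  unfolding diminishes_radius_of_orbits_def
proof
  fix x assume "x \<in> C"
  then have "T x \<in> C" using assms(3) by blast
  then have "rad (T x) (orbit T (T x)) \<le> d"
    using assms(1) orbit_subset_invariant[OF assms(3)] by (intro rad_least orbit_nonempty) blast
  also have "d \<le> rad x (orbit T x)" using assms(2) \<open>x \<in> C\<close> .
  finally show "rad (T x) (orbit T (T x)) \<le> rad x (orbit T x)" .
qed

lemma convex_hull_finite_subset:
  assumes "y \<in> convex hull A"
  obtains F where "finite F" "F \<subseteq> A" "y \<in> convex hull F"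
proof -
  obtain F u where "finite F" "F \<subseteq> A" "\<forall>x\<in>F. 0 \<le> u x" "sum u F = 1" "(\<Sum>v\<in>F. u v *\<^sub>R v) = y"
    using assms unfolding convex_hull_explicit by blast
  moreover from this have "y \<in> convex hull F" unfolding convex_hull_finite[OF \<open>finite F\<close>] by blast
  ultimately show thesis using that by blast
qed

locale diametral_set =
  fixes B :: "'a::real_normed_vector set" and d :: real
  assumes closed: "closed B" and convex: "convex B" and nonempty: "B \<noteq> {}" and pos: "0 < d"
    and norm_diff_le: "\<And>x y. x \<in> B \<Longrightarrow> y \<in> B \<Longrightarrow> norm (x - y) \<le> d"
    and rad_ge: "\<And>x. x \<in> B \<Longrightarrow> d \<le> rad x B"
begin

text \<open>The defect d / (2 (m + 1)^2) allowed at step m adds up, over the at most m + 1 earlier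
  terms, to at most d / (2 (m + 1)) in seq_far_from_hull.\<close>
definition far_point :: "'a set \<Rightarrow> nat \<Rightarrow> 'a" where
  "far_point S m = (SOME w. w \<in> B \<and> d - d / (2 * (real m + 1)^2) \<le> norm (w - barycenter S))"

lemma far_point:
  assumes "S \<subseteq> B" "finite S" "S \<noteq> {}"
  shows "far_point S m \<in> B \<and> d - d / (2 * (real m + 1)^2) \<le> norm (far_point S m - barycenter S)"
  unfolding far_point_def
proof (rule someI_ex, rule ccontr)
  let ?\<eta> = "d / (2 * (real m + 1)^2)"
  assume "\<nexists>w. w \<in> B \<and> d - ?\<eta> \<le> norm (w - barycenter S)"
  then have "norm (barycenter S - w) \<le> d - ?\<eta>" if "w \<in> B" for w
    using that by (auto simp: norm_minus_commute not_le)
  then have "rad (barycenter S) B \<le> d - ?\<eta>" using nonempty by (intro rad_least)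
  moreover have "barycenter S \<in> B"
    using barycenter_in_convex_hull[OF assms(2,3)] hull_minimal[where S = convex, OF assms(1) convex] by blast
  moreover have "0 < ?\<eta>" using pos by simp
  ultimately show False using rad_ge by fastforce
qed

definition seq :: "nat \<Rightarrow> 'a" where
  "seq = greedy_seq far_point (SOME a. a \<in> B)"

lemma seq_in: "seq m \<in> B"
proof (induction m rule: less_induct)
  case (less m)
  show ?case
  proof (cases m)
    case 0
    then show ?thesis unfolding seq_def using nonempty some_in_eq by auto
  next
    case (Suc n)
    then have "seq ` {..n} \<subseteq> B" using less by auto
    then show ?thesis unfolding Suc seq_def greedy_seq_Suc using far_point by (simp add: seq_def)
  qed
qed

lemma seq_far_from_hull:
  assumes "0 < m" "y \<in> convex hull (seq ` {..<m})"
  shows "d - d / (2 * (real m + 1)) \<le> norm (seq m - y)"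
proof -
  obtain n where m: "m = Suc n" using assms(1) gr0_implies_Suc by blast
  let ?S = "seq ` {..n}" and ?\<eta> = "d / (2 * (real m + 1)^2)"
  have S: "?S \<subseteq> B" "finite ?S" "?S \<noteq> {}" using seq_in by auto
  have "seq m = far_point ?S m" unfolding seq_def m greedy_seq_Suc ..
  then have "d - real (card ?S) * ?\<eta> \<le> norm (seq m - y)"
    using far_point[OF S, of m] seq_in norm_diff_le assms(2) \<open>m = Suc n\<close> lessThan_Suc_atMost
    by (intro norm_diff_convex_hull_ge[OF S(2,3)]) auto
  moreover have "real (card ?S) * ?\<eta> \<le> d / (2 * (real m + 1))"
  proof -
    have "real (card ?S) \<le> real m + 1" using card_image_le[of "{..n}" seq] m by simp
    then have "real (card ?S) * ?\<eta> \<le> (real m + 1) * ?\<eta>" using pos by (intro mult_right_mono) auto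
    also have "\<dots> = d / (2 * (real m + 1))" by (simp add: power2_eq_square)
    finally show ?thesis .
  qed
  ultimately show ?thesis by linarith
qed

lemma seq_separated: "n < m \<Longrightarrow> d / 2 \<le> norm (seq m - seq n)"
proof -
  assume "n < m"
  then have "d - d / (2 * (real m + 1)) \<le> norm (seq m - seq n)"
    by (intro seq_far_from_hull) (auto intro: hull_inc)
  moreover have "d / (2 * (real m + 1)) \<le> d / 2" using pos by (intro divide_left_mono) auto
  ultimately show ?thesis by linarith
qed

lemma inj_seq: "inj seq"
proof (rule injI, rule ccontr)
  fix m n assume "seq m = seq n" "m \<noteq> n"
  then show False using seq_separated[of m n] seq_separated[of n m] pos by (cases "m < n") auto
qed

definition seq_hull :: "'a set" where
  "seq_hull = closure (convex hull (range seq))"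

lemma seq_hull_subset: "seq_hull \<subseteq> B"
  unfolding seq_hull_def using seq_in by (intro closure_minimal hull_minimal closed convex) auto

text \<open>Approximate x by a point of the convex hull of finitely many terms; seq_far_from_hull then
  applies to every later term.\<close>
lemma far_from_seq_tail:
  assumes x: "x \<in> seq_hull" and e: "0 < e"
  obtains m where "N \<le> m" "d - e \<le> norm (x - seq m)"
proof -
  obtain y where y: "y \<in> convex hull (range seq)" "dist y x < e / 2"
    using x e unfolding seq_hull_def closure_approachable by (meson half_gt_zero)
  obtain F where F: "finite F" "F \<subseteq> range seq" "y \<in> convex hull F"
    using y(1) by (rule convex_hull_finite_subset)
  obtain I where I: "finite I" "F = seq ` I" using finite_subset_image[OF F(1,2)] by blast
  obtain n0 :: nat where n0: "d / e < real n0" using reals_Archimedean2 by blast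
  define m where "m = Suc (max (max N n0) (Max (insert 0 I)))"
  have "N \<le> m" "0 < m" "real n0 < real m + 1" unfolding m_def by auto
  have "i \<le> Max (insert 0 I)" if "i \<in> I" for i using I(1) that by simp
  then have "I \<subseteq> {..<m}" unfolding m_def by (auto simp: less_Suc_eq_le le_max_iff_disj)
  then have "convex hull F \<subseteq> convex hull (seq ` {..<m})" using I(2) by (intro hull_mono) blast
  then have "y \<in> convex hull (seq ` {..<m})" using F(3) by blast
  then have "d - d / (2 * (real m + 1)) \<le> norm (seq m - y)" by (intro seq_far_from_hull \<open>0 < m\<close>)
  moreover have "d / (2 * (real m + 1)) < e / 2"
  proof -
    have "d < e * real n0" using n0 e by (simp add: divide_less_eq mult.commute)
    also have "\<dots> < e * (real m + 1)" using e \<open>real n0 < real m + 1\<close> by simp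
    finally have "d / (2 * (real m + 1)) < e * (real m + 1) / (2 * (real m + 1))"
      by (intro divide_strict_right_mono) simp_all
    also have "\<dots> = e / 2" by (simp add: field_simps)
    finally show ?thesis .
  qed
  moreover have "norm (seq m - y) \<le> norm (x - seq m) + dist y x"
    using norm_triangle_ineq[of "seq m - x" "x - y"] by (simp add: dist_norm norm_minus_commute)
  ultimately have "d - e \<le> norm (x - seq m)" using y(2) by linarith
  then show thesis using \<open>N \<le> m\<close> that by blast
qed

lemma bounded: "bounded B"
proof -
  obtain b where "b \<in> B" using nonempty by blast
  then have "B \<subseteq> cball b d" using norm_diff_le by (auto simp: dist_norm)
  then show ?thesis using bounded_cball bounded_subset by blast
qed

lemma shift_maps_into: "shift seq ` B \<subseteq> B"
proof (rule image_subsetI)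
  fix x
  obtain n where "shift seq x = seq n" using shift_in_range[of seq x] by blast
  then show "shift seq x \<in> B" using seq_in by simp
qed

lemma rad_orbit_shift_ge:
  assumes "x \<in> seq_hull"
  shows "d \<le> rad x (orbit (shift seq) x)"
proof (rule field_le_epsilon)
  fix e :: real assume "0 < e"
  obtain N where N: "\<And>m. N \<le> m \<Longrightarrow> seq m \<in> orbit (shift seq) x"
    using orbit_shift_contains_tail[OF inj_seq] by blast
  obtain m where "N \<le> m" "d - e \<le> norm (x - seq m)"
    using far_from_seq_tail[OF assms \<open>0 < e\<close>] by blast
  moreover have "bounded (orbit (shift seq) x)"
    using orbit_subset_invariant[OF shift_maps_into] assms seq_hull_subset
    by (intro bounded_subset[OF bounded]) blast
  then have "norm (x - seq m) \<le> rad x (orbit (shift seq) x)"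
    using N[OF \<open>N \<le> m\<close>] by (rule rad_upper)
  ultimately show "d \<le> rad x (orbit (shift seq) x) + e" by linarith
qed

theorem fixed_point_free_self_map:
  obtains C T where "C \<subseteq> B" "closed C" "convex C" "C \<noteq> {}" "T ` C \<subseteq> C"
    "orbitally_kannan C T" "diminishes_radius_of_orbits C T" "\<And>x. x \<in> C \<Longrightarrow> T x \<noteq> x"
proof
  have "range seq \<subseteq> seq_hull" unfolding seq_hull_def by (rule order_trans[OF hull_subset closure_subset])
  then show maps_into: "shift seq ` seq_hull \<subseteq> seq_hull" using shift_in_range[of seq] by blast
  show "seq_hull \<noteq> {}" using \<open>range seq \<subseteq> seq_hull\<close> by blast
  show "seq_hull \<subseteq> B" by (rule seq_hull_subset)
  show "closed seq_hull" "convex seq_hull" unfolding seq_hull_def by (simp_all add: convex_closure)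
  have "norm (x - y) \<le> d" if "x \<in> seq_hull" "y \<in> seq_hull" for x y
    using that seq_hull_subset norm_diff_le by blast
  then show "orbitally_kannan seq_hull (shift seq)" "diminishes_radius_of_orbits seq_hull (shift seq)"
    using rad_orbit_shift_ge maps_into
    by (blast intro: orbitally_kannan_if_orbits_diametral diminishes_radius_if_orbits_diametral)+
  show "shift seq x \<noteq> x" for x using inj_seq by (rule shift_no_fixed_point)
qed

end

section \<open>Weak normal structure and the fixed point property\<close>

lemma normal_structure_if_fixed_point_property:
  fixes K :: "'a::real_normed_vector set"
  assumes K: "weakly_compact K"
    and fixed_point: "\<And>(C :: 'a set) T. weakly_compact C \<Longrightarrow> convex C \<Longrightarrow> C \<noteq> {} \<Longrightarrow>
      T ` C \<subseteq> C \<Longrightarrow> orbitally_kannan C T \<Longrightarrow> diminishes_radius_of_orbits C T \<Longrightarrow>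
      \<exists>x\<in>C. T x = x"
  shows "normal_structure K"
  unfolding normal_structure_def
proof (intro allI impI)
  fix K0 assume K0: "K0 \<subseteq> K \<and> closed K0 \<and> convex K0 \<and> 0 < diameter K0"
  show "\<exists>x0\<in>K0. rad x0 K0 < diameter K0"
  proof (rule ccontr)
    assume diametral: "\<not> (\<exists>x0\<in>K0. rad x0 K0 < diameter K0)"
    have "bounded K0" using K K0 weakly_compact_imp_bounded bounded_subset by blast
    interpret diametral_set K0 "diameter K0"
    proof
      show "closed K0" "convex K0" "0 < diameter K0" using K0 by simp_all
      show "K0 \<noteq> {}" using K0 by (metis diameter_empty less_irrefl)
      show "norm (x - y) \<le> diameter K0" if "x \<in> K0" "y \<in> K0" for x y
        using diameter_bounded_bound[OF \<open>bounded K0\<close> that] by (simp add: dist_norm)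
      show "diameter K0 \<le> rad x K0" if "x \<in> K0" for x
        using diametral that by (simp add: not_less)
    qed
    obtain C T where C: "C \<subseteq> K0" "closed C" "convex C" "C \<noteq> {}" "T ` C \<subseteq> C"
      "orbitally_kannan C T" "diminishes_radius_of_orbits C T" "\<And>x. x \<in> C \<Longrightarrow> T x \<noteq> x"
      by (rule fixed_point_free_self_map) (rule that)
    have "weakly_compact (C \<inter> K)" using K C(2,3) by (rule weakly_compact_Int_closed_convex)
    moreover have "C \<inter> K = C" using C(1) K0 by blast
    ultimately have "weakly_compact C" by simp
    then have "\<exists>x\<in>C. T x = x" by (rule fixed_point[OF _ C(3-7)])
    then show False using C(8) by blast
  qed
qed

theorem theorem4p6:
  shows "weak_normal_structure TYPE('a::banach) \<longleftrightarrow>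
    (\<forall>(C :: 'a set) T. weakly_compact C \<and> convex C \<and> C \<noteq> {} \<and> T ` C \<subseteq> C \<and>
        orbitally_kannan C T \<and> diminishes_radius_of_orbits C T \<longrightarrow>
        (\<exists>!x. x \<in> C \<and> T x = x))"
proof (intro iffI allI impI)
  fix C :: "'a set" and T
  assume wns: "weak_normal_structure TYPE('a)"
    and "weakly_compact C \<and> convex C \<and> C \<noteq> {} \<and> T ` C \<subseteq> C \<and>
      orbitally_kannan C T \<and> diminishes_radius_of_orbits C T"
  then interpret orbitally_kannan_self_map C T by unfold_locales simp_all
  obtain x where "x \<in> C" "T x = x" using fixed_point_exists[OF wns] by blast
  then show "\<exists>!x. x \<in> C \<and> T x = x" using orbitally_kannan_fixed_point_unique[OF kannan] by blast
next
  assume fixed_point_property: "\<forall>(C :: 'a set) T. weakly_compact C \<and> convex C \<and> C \<noteq> {} \<and>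
    T ` C \<subseteq> C \<and> orbitally_kannan C T \<and> diminishes_radius_of_orbits C T \<longrightarrow> (\<exists>!x. x \<in> C \<and> T x = x)"
  have "normal_structure K" if "weakly_compact K" for K :: "'a set"
  proof (rule normal_structure_if_fixed_point_property[OF that])
    fix C :: "'a set" and T
    assume "weakly_compact C" "convex C" "C \<noteq> {}" "T ` C \<subseteq> C" "orbitally_kannan C T"
      "diminishes_radius_of_orbits C T"
    then show "\<exists>x\<in>C. T x = x" using fixed_point_property by blast
  qed
  then show "weak_normal_structure TYPE('a)" unfolding weak_normal_structure_def by blast
qed

end
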